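(* Let $0<r\le1$, $0<s,w<1$ and $0\le\rho,\delta\le1$. Let $a\in S^m_{\rho,\delta,0,2}(\mathbb{T}\times\mathbb{Z})$. If $m<-\frac1r-w-2\delta$, then $T_a:\Lambda^s(\mathbb{T})\to\Lambda^w(\mathbb{T})$ is an $r$-nuclear operator.
   Context: $\widehat f(\xi)=\int_{\mathbb{T}}e^{-i2\pi x\xi}f(x)dx$, $\langle\xi\rangle=(1+|\xi|^2)^{1/2}$. $S^m_{\rho,\delta,0,2}(\mathbb{T}\times\mathbb{Z})$: functions $a(x,\xi)$ smooth in $x\in\mathbb{T}$ for each $\xi\in\mathbb{Z}$ with $|\partial_x^\beta a(x,\xi)|\le C_\beta\langle\xi\rangle^{m+\delta\beta}$ for $0\le\beta\le2$. $T_au(x)=\sum_{\xi\in\mathbb{Z}}e^{i2\pi x\xi}a(x,\xi)\widehat u(\xi)$. For $0<s<1$, $\Lambda^s(\mathbb{T})$ is the Hölder space with norm $\|f\|_{\Lambda^s}=\sup_{x,h\in\mathbb{T}}|f(x+h)-f(x)||h|^{-s}+\sup_{x\in\mathbb{T}}|f(x)|$ (identified in the paper with the Besov space $B^s_{\infty,\infty}(\mathbb{T})$). $T:E\to F$ is $r$-nuclear if $T=\sum_ne'_n(\cdot)y_n$ with $e'_n\in E'$, $y_n\in F$, $\sum_n\|e'_n\|^r_{E'}\|y_n\|^r_F<\infty$. *)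

theory Defs
  imports "HOL-Analysis.Analysis"
begin

text \<open>The torus T = R/Z: functions on T are 1-periodic functions real => complex.\<close>

definition periodic1 :: "(real \<Rightarrow> 'a) \<Rightarrow> bool" where
  "periodic1 f \<longleftrightarrow> (\<forall>x. f (x + 1) = f x)"

text \<open>Distance of h to 0 on the torus, i.e. |h| for the representative in [-1/2,1/2].\<close>
definition tabs :: "real \<Rightarrow> real" where
  "tabs h = \<bar>h - of_int (round h)\<bar>"

definition japanese :: "int \<Rightarrow> real" where
  "japanese \<xi> = sqrt (1 + (real_of_int \<xi>)\<^sup>2)"

definition fourier_coeff :: "(real \<Rightarrow> complex) \<Rightarrow> int \<Rightarrow> complex" where
  "fourier_coeff f \<xi> = integral {0..1} (\<lambda>x. exp (- \<i> * 2 * pi * of_real x * of_int \<xi>) * f x)"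

definition holder_quots :: "real \<Rightarrow> (real \<Rightarrow> complex) \<Rightarrow> real set" where
  "holder_quots s f = {norm (f (x + h) - f x) / (tabs h) powr s | x h. h \<notin> \<int>}"

definition holder_space :: "real \<Rightarrow> (real \<Rightarrow> complex) set" where
  "holder_space s = {f. periodic1 f \<and> bounded (range f) \<and> bdd_above (holder_quots s f)}"

definition holder_norm :: "real \<Rightarrow> (real \<Rightarrow> complex) \<Rightarrow> real" where
  "holder_norm s f = Sup (holder_quots s f) + Sup (range (\<lambda>x. norm (f x)))"

definition cont_functional :: "real \<Rightarrow> ((real \<Rightarrow> complex) \<Rightarrow> complex) \<Rightarrow> bool" where
  "cont_functional s \<phi> \<longleftrightarrow>
     (\<forall>f\<in>holder_space s. \<forall>g\<in>holder_space s. \<phi> (\<lambda>x. f x + g x) = \<phi> f + \<phi> g) \<and>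
     (\<forall>f\<in>holder_space s. \<forall>c. \<phi> (\<lambda>x. c * f x) = c * \<phi> f) \<and>
     (\<exists>C. \<forall>f\<in>holder_space s. norm (\<phi> f) \<le> C * holder_norm s f)"

definition dual_norm :: "real \<Rightarrow> ((real \<Rightarrow> complex) \<Rightarrow> complex) \<Rightarrow> real" where
  "dual_norm s \<phi> = Sup {norm (\<phi> f) | f. f \<in> holder_space s \<and> holder_norm s f \<le> 1}"

definition r_nuclear :: "real \<Rightarrow> real \<Rightarrow> real \<Rightarrow> ((real \<Rightarrow> complex) \<Rightarrow> (real \<Rightarrow> complex)) \<Rightarrow> bool" where
  "r_nuclear r s w T \<longleftrightarrow>
     (\<forall>u\<in>holder_space s. T u \<in> holder_space w) \<and>
     (\<exists>e :: nat \<Rightarrow> (real \<Rightarrow> complex) \<Rightarrow> complex. \<exists>y :: nat \<Rightarrow> real \<Rightarrow> complex.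
        (\<forall>n. cont_functional s (e n)) \<and> (\<forall>n. y n \<in> holder_space w) \<and>
        summable (\<lambda>n. (dual_norm s (e n)) powr r * (holder_norm w (y n)) powr r) \<and>
        (\<forall>u\<in>holder_space s.
           (\<lambda>N. holder_norm w (\<lambda>x. T u x - (\<Sum>n<N. e n u * y n x))) \<longlonglongrightarrow> 0))"

definition symbol_class :: "real \<Rightarrow> real \<Rightarrow> real \<Rightarrow> (real \<Rightarrow> int \<Rightarrow> complex) \<Rightarrow> bool" where
  "symbol_class m \<rho> \<delta> a \<longleftrightarrow>
     (\<forall>\<xi>. periodic1 (\<lambda>x. a x \<xi>)) \<and>
     (\<exists>D :: nat \<Rightarrow> real \<Rightarrow> int \<Rightarrow> complex. D 0 = a \<and>
        (\<forall>k x \<xi>. ((\<lambda>t. D k t \<xi>) has_vector_derivative D (Suc k) x \<xi>) (at x)) \<and>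
        (\<forall>\<beta>\<le>2. \<exists>C. \<forall>x \<xi>. norm (D \<beta> x \<xi>) \<le> C * japanese \<xi> powr (m + \<delta> * real \<beta>)))"

definition pseudo_op :: "(real \<Rightarrow> int \<Rightarrow> complex) \<Rightarrow> (real \<Rightarrow> complex) \<Rightarrow> real \<Rightarrow> complex" where
  "pseudo_op a u x = (\<Sum>\<^sub>\<infinity>\<xi>::int. exp (\<i> * 2 * pi * of_real x * of_int \<xi>) * a x \<xi> * fourier_coeff u \<xi>)"

end

theory Submission
  imports Defs "HOL-Library.Nat_Bijection"
begin

text \<open>Expanding \<open>u\<close> in its Fourier series writes \<open>T\<^sub>a\<close> as a series of rank-one operators
  \<open>u \<mapsto> fourier_coeff u \<xi> \<cdot> y\<^sub>\<xi>\<close>, where \<open>y\<^sub>\<xi>(x) = e\<^sup>2\<^sup>\<pi>\<^sup>i\<^sup>x\<^sup>\<xi> a(x,\<xi>)\<close>. Each coefficient functional has dual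
  norm at most 1 on \<open>\<Lambda>\<^sup>s\<close>. The mode \<open>y\<^sub>\<xi>\<close> is bounded by a multiple of \<open>\<langle>\<xi>\<rangle>\<^sup>m\<close> and, by the
  bound on \<open>\<partial>\<^sub>x a\<close> and \<open>\<delta> \<le> 1\<close>, Lipschitz with constant a multiple of \<open>\<langle>\<xi>\<rangle>\<^sup>m\<^sup>+\<^sup>1\<close>;
  interpolating these two bounds gives \<open>\<Lambda>\<^sup>w\<close>-norm \<open>O(\<langle>\<xi>\<rangle>\<^sup>m\<^sup>+\<^sup>w)\<close>. The hypothesis on \<open>m\<close>
  gives \<open>r(m + w) < -1\<close>, so \<open>\<Sum>\<^sub>\<xi> \<langle>\<xi>\<rangle>\<^sup>r\<^sup>(\<^sup>m\<^sup>+\<^sup>w\<^sup>)\<close> converges, which is the nuclearity condition.\<close>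

section \<open>Hoelder spaces on the torus\<close>

lemma tabs_nonneg: "0 \<le> tabs h"
  by (simp add: tabs_def)

lemma tabs_pos: "h \<notin> \<int> \<Longrightarrow> 0 < tabs h"
proof -
  assume "h \<notin> \<int>"
  then have "h - of_int (round h) \<noteq> 0" by (metis Ints_of_int eq_iff_diff_eq_0)
  then show ?thesis by (simp add: tabs_def)
qed

lemma tabs_le_abs: "tabs h \<le> \<bar>h\<bar>"
proof (cases "\<bar>h\<bar> < 1/2")
  case True
  then have "round h = 0" by (intro round_unique') auto
  then show ?thesis by (simp add: tabs_def)
next
  case False
  moreover have "tabs h \<le> 1/2"
    unfolding tabs_def using of_int_round_abs_le[of h] by linarith
  ultimately show ?thesis by linarith
qed

lemma periodic1_add_int:
  assumes "periodic1 f"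
  shows "f (x + of_int k) = f x"
proof -
  have nat_shift: "f (x + real n) = f x" for x n
  proof (induction n arbitrary: x)
    case (Suc n)
    have "f (x + real (Suc n)) = f ((x + real n) + 1)" by (simp add: algebra_simps)
    with assms Suc show ?case by (simp add: periodic1_def)
  qed simp
  show ?thesis
  proof (cases "k \<ge> 0")
    case True
    then show ?thesis using nat_shift[of x "nat k"] by simp
  next
    case False
    then show ?thesis using nat_shift[of "x + of_int k" "nat (-k)"] by simp
  qed
qed

lemma periodic1_shift_tabs:
  assumes "periodic1 f"
  obtains h' where "\<bar>h'\<bar> = tabs h" "\<And>x. f (x + h) = f (x + h')"
proof
  show "\<bar>h - of_int (round h)\<bar> = tabs h" by (simp add: tabs_def)
  show "f (x + h) = f (x + (h - of_int (round h)))" for x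
    using periodic1_add_int[OF assms, of "x + (h - of_int (round h))" "round h"] by simp
qed

lemma holder_quots_nonempty: "holder_quots s f \<noteq> {}"
proof -
  have "(1/2::real) \<notin> \<int>"
  proof
    assume "(1/2::real) \<in> \<int>"
    then obtain k :: int where "1/2 = real_of_int k" by (auto elim: Ints_cases)
    then have "1 = 2 * k" by linarith
    then show False by presburger
  qed
  then show ?thesis unfolding holder_quots_def by blast
qed

context
  fixes f :: "real \<Rightarrow> complex" and A B w :: real
  assumes periodic: "periodic1 f"
    and bound: "\<And>x. norm (f x) \<le> A"
    and increment: "\<And>x h. norm (f (x + h) - f x) \<le> B * tabs h powr w"
begin

lemma holder_quots_le: "q \<in> holder_quots w f \<Longrightarrow> q \<le> B"
proof -
  assume "q \<in> holder_quots w f"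
  then obtain x h where "q = norm (f (x + h) - f x) / tabs h powr w" "h \<notin> \<int>"
    unfolding holder_quots_def by blast
  with increment[of x h] tabs_pos[of h] show "q \<le> B" by (simp add: divide_le_eq)
qed

lemma holder_spaceI: "f \<in> holder_space w"
  using periodic bound holder_quots_le
  by (auto simp: holder_space_def bounded_iff bdd_above_def)

lemma holder_norm_le: "holder_norm w f \<le> B + A"
proof -
  have "Sup (holder_quots w f) \<le> B"
    using holder_quots_le holder_quots_nonempty by (intro cSup_least) auto
  moreover have "Sup (range (\<lambda>x. norm (f x))) \<le> A"
    using bound by (intro cSup_least) auto
  ultimately show ?thesis by (simp add: holder_norm_def)
qed

end

context
  fixes f :: "real \<Rightarrow> complex" and w :: real
  assumes f: "f \<in> holder_space w"
begin

lemma holder_sup_upper: "norm (f x) \<le> Sup (range (\<lambda>x. norm (f x)))"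
  using f by (intro cSup_upper) (auto simp: holder_space_def bounded_iff bdd_above_def)

lemma holder_quots_Sup_nonneg: "0 \<le> Sup (holder_quots w f)"
proof -
  obtain q where q: "q \<in> holder_quots w f" using holder_quots_nonempty by blast
  then have "0 \<le> q" unfolding holder_quots_def by auto
  also have "q \<le> Sup (holder_quots w f)"
    using f q by (intro cSup_upper) (auto simp: holder_space_def)
  finally show ?thesis .
qed

lemma norm_le_holder_norm: "norm (f x) \<le> holder_norm w f"
  using holder_sup_upper[of x] holder_quots_Sup_nonneg by (simp add: holder_norm_def)

lemma holder_norm_nonneg: "0 \<le> holder_norm w f"
  using norm_le_holder_norm[of 0] norm_ge_zero order_trans by blast

lemma holder_increment_le:
  assumes "h \<notin> \<int>"
  shows "norm (f (x + h) - f x) \<le> holder_norm w f * tabs h powr w"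
proof -
  have pos: "0 < tabs h powr w" using tabs_pos[OF assms] by simp
  have "norm (f (x + h) - f x) / tabs h powr w \<le> Sup (holder_quots w f)"
    using f assms by (intro cSup_upper) (auto simp: holder_quots_def holder_space_def)
  also have "\<dots> \<le> holder_norm w f"
    using order_trans[OF norm_ge_zero holder_sup_upper] by (simp add: holder_norm_def)
  finally show ?thesis using pos by (simp add: divide_le_eq)
qed

lemma holder_space_continuous:
  assumes "0 < w"
  shows "continuous_on UNIV f"
proof -
  have "isCont f x" for x
  proof -
    have "\<forall>\<^sub>F y in at x. norm (f y - f x) \<le> holder_norm w f * \<bar>y - x\<bar> powr w"
      unfolding eventually_at
    proof (intro exI[of _ 1] conjI ballI impI)
      fix y assume y: "y \<noteq> x \<and> dist y x < 1"
      have "y - x \<notin> \<int>"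
      proof
        assume "y - x \<in> \<int>"
        then obtain k :: int where "y - x = of_int k" by (auto elim: Ints_cases)
        moreover have "\<bar>y - x\<bar> < 1" "y - x \<noteq> 0" using y by (auto simp: dist_real_def)
        ultimately show False by (cases "k = 0") auto
      qed
      then have "norm (f (x + (y - x)) - f x) \<le> holder_norm w f * tabs (y - x) powr w"
        by (rule holder_increment_le)
      also have "\<dots> \<le> holder_norm w f * \<bar>y - x\<bar> powr w"
        using assms holder_norm_nonneg tabs_le_abs tabs_nonneg
        by (intro mult_left_mono powr_mono2) auto
      finally show "norm (f y - f x) \<le> holder_norm w f * \<bar>y - x\<bar> powr w" by simp
    qed simp
    moreover have "((\<lambda>y. holder_norm w f * \<bar>y - x\<bar> powr w) \<longlongrightarrow> 0) (at x)"
      using assms by (auto intro!: tendsto_mult_right_zero tendsto_zero_powrI tendsto_eq_intros)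
    ultimately have "((\<lambda>y. f y - f x) \<longlongrightarrow> 0) (at x)"
      by (rule Lim_null_comparison)
    then show ?thesis unfolding isCont_def by (rule LIM_zero_cancel)
  qed
  then show ?thesis by (simp add: continuous_at_imp_continuous_on)
qed

end

section \<open>Fourier coefficients\<close>

lemma fourier_coeff_integrable:
  assumes "continuous_on UNIV u"
  shows "(\<lambda>x. exp (- \<i> * 2 * pi * of_real x * of_int \<xi>) * u x) integrable_on {0..1}"
  using continuous_on_subset[OF assms, of "{0..1}"]
  by (intro integrable_continuous_interval continuous_intros) auto

lemma norm_fourier_coeff_le:
  assumes "\<And>x. norm (u x) \<le> B"
  shows "norm (fourier_coeff u \<xi>) \<le> B"
proof (cases "(\<lambda>x. exp (- \<i> * 2 * pi * of_real x * of_int \<xi>) * u x) integrable_on {0..1}")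
  case True
  then have "((\<lambda>x. exp (- \<i> * 2 * pi * of_real x * of_int \<xi>) * u x)
      has_integral fourier_coeff u \<xi>) (cbox 0 1)"
    unfolding fourier_coeff_def cbox_interval by (rule integrable_integral)
  moreover have "0 \<le> B" using assms[of 0] norm_ge_zero order_trans by blast
  ultimately show ?thesis
    using has_integral_bound[of B _ "fourier_coeff u \<xi>" 0 "1::real"] assms
    by (simp add: norm_mult)
next
  case False
  then show ?thesis using order_trans[OF norm_ge_zero assms[of 0]]
    by (simp add: fourier_coeff_def not_integrable_integral)
qed

lemma fourier_coeff_cmult: "fourier_coeff (\<lambda>x. c * f x) \<xi> = c * fourier_coeff f \<xi>"
proof -
  have "(\<lambda>x. exp (- \<i> * 2 * pi * of_real x * of_int \<xi>) * (c * f x))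
      = (\<lambda>x. c * (exp (- \<i> * 2 * pi * of_real x * of_int \<xi>) * f x))"
    by (simp add: mult.left_commute)
  then show ?thesis by (simp add: fourier_coeff_def)
qed

context
  fixes s :: real
  assumes s: "0 < s"
begin

lemma fourier_coeff_add:
  assumes "f \<in> holder_space s" "g \<in> holder_space s"
  shows "fourier_coeff (\<lambda>x. f x + g x) \<xi> = fourier_coeff f \<xi> + fourier_coeff g \<xi>"
  using integral_add[OF fourier_coeff_integrable[OF holder_space_continuous[OF assms(1) s]]
      fourier_coeff_integrable[OF holder_space_continuous[OF assms(2) s]]]
  by (simp add: fourier_coeff_def distrib_left)

lemma cont_functional_fourier_coeff: "cont_functional s (\<lambda>u. fourier_coeff u \<xi>)"
  unfolding cont_functional_def
  using fourier_coeff_add fourier_coeff_cmult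
    norm_fourier_coeff_le[OF norm_le_holder_norm]
  by (intro conjI exI[of _ 1]) auto

end

lemma dual_norm_fourier_coeff:
  "0 \<le> dual_norm s (\<lambda>u. fourier_coeff u \<xi>)" "dual_norm s (\<lambda>u. fourier_coeff u \<xi>) \<le> 1"
proof -
  let ?S = "{norm (fourier_coeff f \<xi>) | f. f \<in> holder_space s \<and> holder_norm s f \<le> 1}"
  have le1: "q \<le> 1" if "q \<in> ?S" for q
  proof -
    from that obtain f where f: "q = norm (fourier_coeff f \<xi>)" "f \<in> holder_space s" "holder_norm s f \<le> 1"
      by blast
    have "norm (f x) \<le> 1" for x using norm_le_holder_norm[OF f(2), of x] f(3) by linarith
    then show ?thesis using norm_fourier_coeff_le f(1) by blast
  qed
  have "(\<lambda>x. 0) \<in> holder_space s" "holder_norm s (\<lambda>x. 0) \<le> 1"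
    using holder_spaceI[of "\<lambda>x. 0" 0 0 s] holder_norm_le[of "\<lambda>x. 0" 0 0 s]
    by (simp_all add: periodic1_def)
  then have zero: "norm (fourier_coeff (\<lambda>x. 0) \<xi>) \<in> ?S" by blast
  have "0 \<le> norm (fourier_coeff (\<lambda>x. 0) \<xi>)" by simp
  also have "\<dots> \<le> Sup ?S" using zero le1 by (intro cSup_upper bdd_aboveI)
  finally show "0 \<le> dual_norm s (\<lambda>u. fourier_coeff u \<xi>)" unfolding dual_norm_def .
  have "?S \<noteq> {}" using zero by blast
  then show "dual_norm s (\<lambda>u. fourier_coeff u \<xi>) \<le> 1"
    unfolding dual_norm_def using le1 by (rule cSup_least)
qed

section \<open>Hoelder bounds by interpolation\<close>

lemma le_powr_interpolate:
  fixes X P R w :: real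
  assumes "0 \<le> X" "X \<le> P" "X \<le> R" "0 \<le> w" "w \<le> 1"
  shows "X \<le> P powr (1 - w) * R powr w"
proof (cases "X = 0")
  case False
  then have "X = X powr (1 - w) * X powr w" using assms by (simp flip: powr_add)
  also have "\<dots> \<le> P powr (1 - w) * R powr w"
    using assms by (intro mult_mono powr_mono2) auto
  finally show ?thesis .
qed simp

lemma holder_increment_interpolate:
  fixes f :: "real \<Rightarrow> 'a::real_normed_vector"
  assumes "periodic1 f" and "\<And>x. norm (f x) \<le> A"
    and "\<And>x y. norm (f y - f x) \<le> L * \<bar>y - x\<bar>"
    and "0 \<le> w" "w \<le> 1"
  shows "norm (f (x + h) - f x) \<le> (2 * A) powr (1 - w) * L powr w * tabs h powr w"
proof -
  obtain h' where h': "\<bar>h'\<bar> = tabs h" "\<And>x. f (x + h) = f (x + h')"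
    using periodic1_shift_tabs[OF assms(1)] by blast
  have "norm (f (x + h) - f x) \<le> 2 * A"
    using norm_triangle_ineq4[of "f (x + h)" "f x"] assms(2)[of x] assms(2)[of "x + h"] by simp
  moreover have "norm (f (x + h) - f x) \<le> L * tabs h"
    using assms(3)[of x "x + h'"] h' by (simp add: norm_minus_commute)
  ultimately have "norm (f (x + h) - f x) \<le> (2 * A) powr (1 - w) * (L * tabs h) powr w"
    using assms by (intro le_powr_interpolate) auto
  moreover have "0 \<le> L"
    using assms(3)[of 0 1] by (simp add: order_trans[OF norm_ge_zero])
  ultimately show ?thesis using tabs_nonneg[of h] by (simp add: powr_mult mult.assoc)
qed

lemma norm_diff_le_of_vector_derivative_bound:
  fixes f f' :: "real \<Rightarrow> 'a::real_normed_vector"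
  assumes "\<And>x. (f has_vector_derivative f' x) (at x)" and "\<And>x. norm (f' x) \<le> L"
  shows "norm (f y - f x) \<le> L * \<bar>y - x\<bar>"
proof -
  have "norm (f y - f x) \<le> L * norm (y - x)"
  proof (rule differentiable_bound[where S = UNIV and f' = "\<lambda>x t. t *\<^sub>R f' x"])
    show "(f has_derivative (\<lambda>t. t *\<^sub>R f' x)) (at x within UNIV)" for x
      using assms(1)[of x] by (simp add: has_vector_derivative_def)
    show "onorm (\<lambda>t. t *\<^sub>R f' x) \<le> L" for x
      using assms(2)[of x] by (simp add: onorm_scaleR_left[OF bounded_linear_ident] onorm_id)
  qed auto
  then show ?thesis by simp
qed

section \<open>Modes of the symbol\<close>

lemma japanese_ge_1: "1 \<le> japanese \<xi>"
  by (simp add: japanese_def)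

lemma abs_le_japanese: "\<bar>real_of_int \<xi>\<bar> \<le> japanese \<xi>"
  unfolding japanese_def by (rule real_le_rsqrt) simp

lemma japanese_powr_pos: "0 < japanese \<xi> powr t"
  using japanese_ge_1[of \<xi>] by simp

definition symbol_mode :: "(real \<Rightarrow> int \<Rightarrow> complex) \<Rightarrow> int \<Rightarrow> real \<Rightarrow> complex" where
  "symbol_mode a \<xi> x = exp (\<i> * 2 * pi * of_real x * of_int \<xi>) * a x \<xi>"

lemma pseudo_op_eq_symbol_modes:
  "pseudo_op a u x = (\<Sum>\<^sub>\<infinity>\<xi>::int. fourier_coeff u \<xi> * symbol_mode a \<xi> x)"
  by (simp add: pseudo_op_def symbol_mode_def mult_ac)

lemma periodic1_exp_int: "periodic1 (\<lambda>x. exp (\<i> * 2 * pi * of_real x * of_int \<xi>))"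
proof -
  have "exp (\<i> * 2 * pi * of_real (x + 1) * of_int \<xi>)
      = exp (\<i> * 2 * pi * of_real x * of_int \<xi> + 2 * of_int \<xi> * pi * \<i>)" for x
    by (rule arg_cong[where f = exp]) (simp add: algebra_simps)
  then have "exp (\<i> * 2 * pi * of_real (x + 1) * of_int \<xi>)
      = exp (\<i> * 2 * pi * of_real x * of_int \<xi>) * exp (2 * of_int \<xi> * pi * \<i>)" for x
    by (simp add: exp_add)
  moreover have "exp (2 * of_int \<xi> * pi * \<i>) = 1" by (rule exp_integer_2pi) simp
  ultimately show ?thesis by (simp add: periodic1_def)
qed

lemma exp_int_has_vector_derivative:
  "((\<lambda>t. exp (\<i> * 2 * pi * of_real t * of_int \<xi>)) has_vector_derivative
      \<i> * 2 * pi * of_int \<xi> * exp (\<i> * 2 * pi * of_real x * of_int \<xi>)) (at x)"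
proof -
  define c where "c = \<i> * 2 * pi * of_int \<xi>"
  have "exp (t *\<^sub>R c) = exp (\<i> * 2 * pi * of_real t * of_int \<xi>)" for t
    by (simp add: c_def scaleR_conv_of_real algebra_simps)
  then show ?thesis
    using exp_scaleR_has_vector_derivative_left[of c x] by (simp add: c_def)
qed

context
  fixes m \<rho> \<delta> :: real and a :: "real \<Rightarrow> int \<Rightarrow> complex"
  assumes symbol: "symbol_class m \<rho> \<delta> a" and \<delta>: "\<delta> \<le> 1"
begin

lemma periodic1_symbol_mode: "periodic1 (symbol_mode a \<xi>)"
  using symbol periodic1_exp_int[of \<xi>] by (simp add: symbol_class_def symbol_mode_def periodic1_def)

lemma symbol_class_first_derivative:
  obtains C0 C1 a' where "0 \<le> C0" "0 \<le> C1"
    "\<And>x \<xi>. norm (a x \<xi>) \<le> C0 * japanese \<xi> powr m"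
    "\<And>x \<xi>. ((\<lambda>t. a t \<xi>) has_vector_derivative a' x \<xi>) (at x)"
    "\<And>x \<xi>. norm (a' x \<xi>) \<le> C1 * japanese \<xi> powr (m + \<delta>)"
proof -
  obtain D :: "nat \<Rightarrow> real \<Rightarrow> int \<Rightarrow> complex" where D0: "D 0 = a"
    and D_deriv: "\<And>k x \<xi>. ((\<lambda>t. D k t \<xi>) has_vector_derivative D (Suc k) x \<xi>) (at x)"
    and D_bound: "\<And>\<beta>. \<beta> \<le> 2 \<Longrightarrow> \<exists>C. \<forall>x \<xi>. norm (D \<beta> x \<xi>) \<le> C * japanese \<xi> powr (m + \<delta> * real \<beta>)"
    using symbol unfolding symbol_class_def by blast
  have nonneg: "0 \<le> C" if "\<And>x \<xi>. norm (D k x \<xi>) \<le> C * japanese \<xi> powr t" for k C t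
    using that[of 0 0] japanese_powr_pos[of 0 t] norm_ge_zero[of "D k 0 0"]
    by (meson order_trans zero_le_mult_iff not_le)
  obtain C0 where C0: "\<And>x \<xi>. norm (D 0 x \<xi>) \<le> C0 * japanese \<xi> powr m"
    using D_bound[of 0] by auto
  obtain C1 where C1: "\<And>x \<xi>. norm (D 1 x \<xi>) \<le> C1 * japanese \<xi> powr (m + \<delta>)"
    using D_bound[of 1] by auto
  show ?thesis
  proof (rule that[of C0 C1 "D 1"])
    show "((\<lambda>t. a t \<xi>) has_vector_derivative D 1 x \<xi>) (at x)" for x \<xi>
      using D_deriv[of 0] by (simp add: D0)
  qed (use nonneg[OF C0] nonneg[OF C1] C0 C1 D0 in auto)
qed

lemma symbol_mode_bounds:
  obtains C0 L where "0 \<le> C0" "0 \<le> L"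
    "\<And>\<xi> x. norm (symbol_mode a \<xi> x) \<le> C0 * japanese \<xi> powr m"
    "\<And>\<xi> x y. norm (symbol_mode a \<xi> y - symbol_mode a \<xi> x) \<le> L * japanese \<xi> powr (m + 1) * \<bar>y - x\<bar>"
proof -
  obtain C0 C1 a' where C0: "0 \<le> C0" and C1: "0 \<le> C1"
    and a_bound: "\<And>x \<xi>. norm (a x \<xi>) \<le> C0 * japanese \<xi> powr m"
    and a_deriv: "\<And>x \<xi>. ((\<lambda>t. a t \<xi>) has_vector_derivative a' x \<xi>) (at x)"
    and a'_bound: "\<And>x \<xi>. norm (a' x \<xi>) \<le> C1 * japanese \<xi> powr (m + \<delta>)"
    using symbol_class_first_derivative by blast
  define E where "E \<xi> x = exp (\<i> * 2 * pi * of_real x * of_int \<xi>)" for \<xi> x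
  have norm_E: "norm (E \<xi> x) = 1" for \<xi> x by (simp add: E_def)
  have deriv: "(symbol_mode a \<xi> has_vector_derivative
      E \<xi> x * a' x \<xi> + \<i> * 2 * pi * of_int \<xi> * E \<xi> x * a x \<xi>) (at x)" for \<xi> x
    using has_vector_derivative_mult[OF exp_int_has_vector_derivative a_deriv]
    by (simp add: symbol_mode_def[abs_def] E_def)
  have deriv_bound: "norm (E \<xi> x * a' x \<xi> + \<i> * 2 * pi * of_int \<xi> * E \<xi> x * a x \<xi>)
      \<le> (2 * pi * C0 + C1) * japanese \<xi> powr (m + 1)" for \<xi> x
  proof -
    let ?J = "japanese \<xi>"
    have "norm (\<i> * 2 * pi * of_int \<xi> * E \<xi> x * a x \<xi>) = 2 * pi * \<bar>real_of_int \<xi>\<bar> * norm (a x \<xi>)"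
      by (simp add: norm_mult norm_E)
    also have "\<dots> \<le> 2 * pi * ?J * (C0 * ?J powr m)"
      using abs_le_japanese[of \<xi>] a_bound[of x \<xi>] by (intro mult_mono mult_left_mono) auto
    also have "\<dots> = 2 * pi * C0 * ?J powr (m + 1)"
      using japanese_ge_1[of \<xi>] by (simp add: powr_add)
    finally have "norm (\<i> * 2 * pi * of_int \<xi> * E \<xi> x * a x \<xi>) \<le> 2 * pi * C0 * ?J powr (m + 1)" .
    moreover have "norm (E \<xi> x * a' x \<xi>) \<le> C1 * ?J powr (m + 1)"
      using a'_bound[of x \<xi>] order_trans[OF _ mult_left_mono[OF powr_mono[OF _ japanese_ge_1]]] \<delta> C1
      by (simp add: norm_mult norm_E)
    ultimately have "norm (E \<xi> x * a' x \<xi> + \<i> * 2 * pi * of_int \<xi> * E \<xi> x * a x \<xi>)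
        \<le> C1 * ?J powr (m + 1) + 2 * pi * C0 * ?J powr (m + 1)"
      by (meson add_mono norm_triangle_le)
    then show ?thesis by (simp add: algebra_simps)
  qed
  show ?thesis
  proof (rule that[of C0 "2 * pi * C0 + C1"])
    show "0 \<le> 2 * pi * C0 + C1" using C0 C1 by simp
    show "norm (symbol_mode a \<xi> x) \<le> C0 * japanese \<xi> powr m" for \<xi> x
      using a_bound by (simp add: symbol_mode_def norm_mult)
    show "norm (symbol_mode a \<xi> y - symbol_mode a \<xi> x)
        \<le> (2 * pi * C0 + C1) * japanese \<xi> powr (m + 1) * \<bar>y - x\<bar>" for \<xi> x y
      by (rule norm_diff_le_of_vector_derivative_bound[OF deriv deriv_bound])
  qed (use C0 in simp)
qed

lemma symbol_mode_holder_bounds: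
  assumes "0 \<le> w" "w \<le> 1"
  obtains M where "0 \<le> M"
    "\<And>\<xi> x. norm (symbol_mode a \<xi> x) \<le> M * japanese \<xi> powr (m + w)"
    "\<And>\<xi> x h. norm (symbol_mode a \<xi> (x + h) - symbol_mode a \<xi> x)
        \<le> M * japanese \<xi> powr (m + w) * tabs h powr w"
proof -
  obtain C0 L where C0: "0 \<le> C0" and L: "0 \<le> L"
    and sup: "\<And>\<xi> x. norm (symbol_mode a \<xi> x) \<le> C0 * japanese \<xi> powr m"
    and lip: "\<And>\<xi> x y. norm (symbol_mode a \<xi> y - symbol_mode a \<xi> x) \<le> L * japanese \<xi> powr (m + 1) * \<bar>y - x\<bar>"
    using symbol_mode_bounds by blast
  define K where "K = (2 * C0) powr (1 - w) * L powr w"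
  have increment: "norm (symbol_mode a \<xi> (x + h) - symbol_mode a \<xi> x)
      \<le> K * japanese \<xi> powr (m + w) * tabs h powr w" for \<xi> x h
  proof -
    let ?J = "japanese \<xi>"
    have "norm (symbol_mode a \<xi> (x + h) - symbol_mode a \<xi> x)
        \<le> (2 * (C0 * ?J powr m)) powr (1 - w) * (L * ?J powr (m + 1)) powr w * tabs h powr w"
      using assms by (intro holder_increment_interpolate periodic1_symbol_mode sup lip)
    also have "\<dots> = K * (?J powr (m * (1 - w)) * ?J powr ((m + 1) * w)) * tabs h powr w"
      using C0 L by (simp add: K_def powr_mult powr_powr mult_ac)
    also have "?J powr (m * (1 - w)) * ?J powr ((m + 1) * w) = ?J powr (m + w)"
      by (simp add: algebra_simps flip: powr_add)
    finally show ?thesis by (simp add: mult.assoc)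
  qed
  show ?thesis
  proof
    show "0 \<le> K + C0" using C0 by (simp add: K_def)
    show "norm (symbol_mode a \<xi> x) \<le> (K + C0) * japanese \<xi> powr (m + w)" for \<xi> x
    proof -
      have "norm (symbol_mode a \<xi> x) \<le> C0 * japanese \<xi> powr (m + w)"
        using sup[of \<xi> x] C0 assms japanese_ge_1[of \<xi>]
        by (meson add_increasing2 mult_left_mono order_trans order_refl powr_mono)
      also have "\<dots> \<le> (K + C0) * japanese \<xi> powr (m + w)"
        using japanese_powr_pos[of \<xi> "m + w"] by (simp add: K_def)
      finally show ?thesis .
    qed
    show "norm (symbol_mode a \<xi> (x + h) - symbol_mode a \<xi> x)
        \<le> (K + C0) * japanese \<xi> powr (m + w) * tabs h powr w" for \<xi> x h
    proof -
      have "K * japanese \<xi> powr (m + w) * tabs h powr w \<le> (K + C0) * japanese \<xi> powr (m + w) * tabs h powr w"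
        using C0 japanese_powr_pos[of \<xi> "m + w"] by (intro mult_right_mono) auto
      then show ?thesis using increment[of \<xi> x h] by linarith
    qed
  qed
qed

end

section \<open>Series of Hoelder functions\<close>

locale holder_series =
  fixes c :: "nat \<Rightarrow> complex" and f :: "nat \<Rightarrow> real \<Rightarrow> complex" and b :: "nat \<Rightarrow> real"
    and U w :: real
  assumes periodic: "\<And>n. periodic1 (f n)"
    and coeff_bound: "\<And>n. norm (c n) \<le> U"
    and bound: "\<And>n x. norm (f n x) \<le> b n"
    and increment: "\<And>n x h. norm (f n (x + h) - f n x) \<le> b n * tabs h powr w"
    and bound_summable: "summable b"
begin

lemma coeff_bound_nonneg: "0 \<le> U"
  using order_trans[OF norm_ge_zero coeff_bound[of 0]] .

lemma norm_term_le: "norm (c n * f n x) \<le> U * b n"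
  unfolding norm_mult using coeff_bound bound coeff_bound_nonneg by (intro mult_mono) auto

lemma summable_norm_terms: "summable (\<lambda>n. norm (c n * f n x))"
  by (rule summable_comparison_test'[OF summable_mult[OF bound_summable, of U], where N = 0])
    (simp only: real_norm_def abs_norm_cancel norm_term_le)

lemma norm_series_le: "norm (\<Sum>n. c n * f n x) \<le> U * suminf b"
proof -
  have "norm (\<Sum>n. c n * f n x) \<le> (\<Sum>n. norm (c n * f n x))"
    by (rule summable_norm[OF summable_norm_terms])
  also have "\<dots> \<le> (\<Sum>n. U * b n)"
    using norm_term_le summable_norm_terms summable_mult[OF bound_summable] by (rule suminf_le)
  also have "\<dots> = U * suminf b" by (rule suminf_mult[OF bound_summable])
  finally show ?thesis .
qed

lemma norm_series_increment_le:
  "norm ((\<Sum>n. c n * f n (x + h)) - (\<Sum>n. c n * f n x)) \<le> U * suminf b * tabs h powr w"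
proof -
  have term_bound: "norm (c n * (f n (x + h) - f n x)) \<le> U * b n * tabs h powr w" for n
  proof -
    have "norm (c n) * norm (f n (x + h) - f n x) \<le> U * (b n * tabs h powr w)"
      using coeff_bound increment coeff_bound_nonneg by (rule mult_mono) simp
    then show ?thesis by (simp only: norm_mult mult.assoc)
  qed
  have summable_bound: "summable (\<lambda>n. U * b n * tabs h powr w)"
    by (intro summable_mult2 summable_mult bound_summable)
  have summable_norm_increments: "summable (\<lambda>n. norm (c n * (f n (x + h) - f n x)))"
    by (rule summable_comparison_test'[OF summable_bound, where N = 0])
      (simp only: real_norm_def abs_norm_cancel term_bound)
  have "(\<Sum>n. c n * f n (x + h)) - (\<Sum>n. c n * f n x) = (\<Sum>n. c n * (f n (x + h) - f n x))"
    unfolding right_diff_distrib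
    by (rule suminf_diff[OF summable_norm_cancel[OF summable_norm_terms]
          summable_norm_cancel[OF summable_norm_terms]])
  also have "norm \<dots> \<le> (\<Sum>n. norm (c n * (f n (x + h) - f n x)))"
    by (rule summable_norm[OF summable_norm_increments])
  also have "\<dots> \<le> (\<Sum>n. U * b n * tabs h powr w)"
    by (rule suminf_le[OF term_bound summable_norm_increments summable_bound])
  also have "\<dots> = (\<Sum>n. U * b n) * tabs h powr w"
    by (rule suminf_mult2[symmetric, OF summable_mult[OF bound_summable]])
  also have "\<dots> = U * suminf b * tabs h powr w"
    by (simp only: suminf_mult[OF bound_summable])
  finally show ?thesis .
qed

lemma periodic1_series: "periodic1 (\<lambda>x. \<Sum>n. c n * f n x)"
proof -
  have "f n (x + 1) = f n x" for n x
    using periodic[of n] unfolding periodic1_def by blast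
  then show ?thesis unfolding periodic1_def by simp
qed

lemmas series_holder_estimates =
  periodic1_series norm_series_le norm_series_increment_le

lemma series_in_holder_space: "(\<lambda>x. \<Sum>n. c n * f n x) \<in> holder_space w"
  by (rule holder_spaceI[where A = "U * suminf b" and B = "U * suminf b", OF series_holder_estimates])

lemma holder_norm_series_le: "holder_norm w (\<lambda>x. \<Sum>n. c n * f n x) \<le> 2 * U * suminf b"
  using holder_norm_le[where A = "U * suminf b" and B = "U * suminf b", OF series_holder_estimates]
  by simp

lemma series_minus_partial_sum:
  "(\<Sum>n. c n * f n x) - (\<Sum>n<N. c n * f n x) = (\<Sum>k. c (k + N) * f (k + N) x)"
  by (rule suminf_minus_initial_segment[symmetric, OF summable_norm_cancel[OF summable_norm_terms]])

lemma holder_norm_series_remainder_tendsto_zero: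
  "(\<lambda>N. holder_norm w (\<lambda>x. (\<Sum>n. c n * f n x) - (\<Sum>n<N. c n * f n x))) \<longlonglongrightarrow> 0"
proof -
  have tail: "holder_series (\<lambda>k. c (k + N)) (\<lambda>k. f (k + N)) (\<lambda>k. b (k + N)) U w" for N
    using periodic coeff_bound bound increment summable_ignore_initial_segment[OF bound_summable]
    by (intro holder_series.intro) auto
  have "(\<lambda>N. \<Sum>k. b (k + N)) \<longlonglongrightarrow> 0"
    using bound_summable by (rule suminf_exist_split2)
  then have lim: "(\<lambda>N. 2 * U * (\<Sum>k. b (k + N))) \<longlonglongrightarrow> 0"
    by (rule tendsto_mult_right_zero)
  show ?thesis
    unfolding series_minus_partial_sum
  proof (rule tendsto_sandwich[OF _ _ tendsto_const lim])
    show "\<forall>\<^sub>F N in sequentially. 0 \<le> holder_norm w (\<lambda>x. \<Sum>k. c (k + N) * f (k + N) x)"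
      by (intro always_eventually allI holder_norm_nonneg holder_series.series_in_holder_space[OF tail])
    show "\<forall>\<^sub>F N in sequentially. holder_norm w (\<lambda>x. \<Sum>k. c (k + N) * f (k + N) x)
        \<le> 2 * U * (\<Sum>k. b (k + N))"
      by (intro always_eventually allI holder_series.holder_norm_series_le[OF tail])
  qed
qed

end

section \<open>Nuclearity\<close>

lemma infsum_int_decode:
  fixes \<phi> :: "int \<Rightarrow> 'a::banach"
  assumes "summable (\<lambda>n. norm (\<phi> (int_decode n)))"
  shows "(\<Sum>\<^sub>\<infinity>\<xi>. \<phi> \<xi>) = (\<Sum>n. \<phi> (int_decode n))"
proof -
  have "(\<lambda>n. \<phi> (int_decode n)) sums (\<Sum>\<^sub>\<infinity>n. \<phi> (int_decode n))"
    using assms by (intro has_sum_imp_sums has_sum_infsum norm_summable_imp_summable_on)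
  moreover have "(\<Sum>\<^sub>\<infinity>n. \<phi> (int_decode n)) = (\<Sum>\<^sub>\<infinity>\<xi>. \<phi> \<xi>)"
    using inj_int_decode surj_int_decode
    by (intro infsum_reindex_bij_betw) (simp add: bij_betw_def)
  ultimately show ?thesis by (simp add: sums_iff)
qed

lemma real_le_abs_int_decode: "real n \<le> 2 * \<bar>real_of_int (int_decode n)\<bar> + 1"
proof -
  have "int_decode n = (if even n then int (n div 2) else - int (n div 2) - 1)"
    by (simp add: int_decode_def sum_decode_def)
  moreover have "n \<le> 2 * (n div 2) + 1" by presburger
  ultimately have "int n \<le> 2 * \<bar>int_decode n\<bar> + 1" by auto
  then show ?thesis by linarith
qed

lemma summable_japanese_int_decode_powr:
  assumes "q < -1"
  shows "summable (\<lambda>n. japanese (int_decode n) powr q)"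
proof (rule summable_comparison_test'[where N = 0])
  show "summable (\<lambda>n. 4 powr (- q) * real (Suc n) powr q)"
    using summable_real_powr_iff[of q] assms summable_Suc_iff[of "\<lambda>n. real n powr q"]
    by (intro summable_mult) simp
  fix n :: nat
  have "real n + 1 \<le> 4 * japanese (int_decode n)"
    using real_le_abs_int_decode[of n] abs_le_japanese[of "int_decode n"] japanese_ge_1[of "int_decode n"]
    by linarith
  then have "(real n + 1) / 4 \<le> japanese (int_decode n)" by simp
  then have "japanese (int_decode n) powr q \<le> ((real n + 1) / 4) powr q"
    using assms by (intro powr_mono2') auto
  also have "\<dots> = real (Suc n) powr q / 4 powr q"
    by (subst powr_divide) (auto simp: add.commute)
  also have "\<dots> = 4 powr (- q) * real (Suc n) powr q"
    by (simp only: powr_minus divide_inverse mult.commute)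
  finally show "norm (japanese (int_decode n) powr q) \<le> 4 powr (- q) * real (Suc n) powr q"
    by simp
qed

text \<open>Summability of \<open>b\<close> itself (which follows from that of \<open>b\<^sup>r\<close> when \<open>r \<le> 1\<close>) is what
  makes the expansion converge in \<open>\<Lambda>\<^sup>w\<close>.\<close>

lemma r_nuclear_of_fourier_expansion:
  fixes y :: "int \<Rightarrow> real \<Rightarrow> complex" and b :: "int \<Rightarrow> real"
  assumes "0 < s" "0 < r"
    and expansion: "\<And>u x. u \<in> holder_space s \<Longrightarrow> T u x = (\<Sum>\<^sub>\<infinity>\<xi>. fourier_coeff u \<xi> * y \<xi> x)"
    and periodic: "\<And>\<xi>. periodic1 (y \<xi>)"
    and bound: "\<And>\<xi> x. norm (y \<xi> x) \<le> b \<xi>"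
    and increment: "\<And>\<xi> x h. norm (y \<xi> (x + h) - y \<xi> x) \<le> b \<xi> * tabs h powr w"
    and bound_summable: "summable (\<lambda>n. b (int_decode n))"
    and bound_powr_summable: "summable (\<lambda>n. b (int_decode n) powr r)"
  shows "r_nuclear r s w T"
proof -
  have b_nonneg: "0 \<le> b \<xi>" for \<xi>
    using order_trans[OF norm_ge_zero bound[of \<xi> 0]] .
  have y_holder: "y \<xi> \<in> holder_space w" for \<xi>
    by (rule holder_spaceI[OF periodic bound increment])
  have nuclear_term_le: "dual_norm s (\<lambda>u. fourier_coeff u \<xi>) powr r * holder_norm w (y \<xi>) powr r
      \<le> 2 powr r * b \<xi> powr r" for \<xi>
  proof -
    have "dual_norm s (\<lambda>u. fourier_coeff u \<xi>) powr r \<le> 1"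
      using dual_norm_fourier_coeff[of s \<xi>] \<open>0 < r\<close> powr_mono2[of r _ 1] by simp
    moreover have "holder_norm w (y \<xi>) powr r \<le> (2 * b \<xi>) powr r"
      using holder_norm_le[OF periodic bound increment, of \<xi>] holder_norm_nonneg[OF y_holder] \<open>0 < r\<close>
      by (intro powr_mono2) auto
    ultimately have "dual_norm s (\<lambda>u. fourier_coeff u \<xi>) powr r * holder_norm w (y \<xi>) powr r
        \<le> 1 * (2 * b \<xi>) powr r"
      by (intro mult_mono) auto
    then show ?thesis using b_nonneg[of \<xi>] by (simp add: powr_mult)
  qed
  have expansion_holder: "T u \<in> holder_space w"
    and expansion_converges:
      "(\<lambda>N. holder_norm w (\<lambda>x. T u x - (\<Sum>n<N. fourier_coeff u (int_decode n) * y (int_decode n) x)))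
        \<longlonglongrightarrow> 0"
    if u: "u \<in> holder_space s" for u
  proof -
    interpret holder_series "\<lambda>n. fourier_coeff u (int_decode n)" "\<lambda>n. y (int_decode n)"
      "\<lambda>n. b (int_decode n)" "holder_norm s u" w
      using periodic bound increment bound_summable norm_fourier_coeff_le[OF norm_le_holder_norm[OF u]]
      by (intro holder_series.intro) auto
    have T_eq: "T u = (\<lambda>x. \<Sum>n. fourier_coeff u (int_decode n) * y (int_decode n) x)"
    proof
      fix x
      show "T u x = (\<Sum>n. fourier_coeff u (int_decode n) * y (int_decode n) x)"
        unfolding expansion[OF u]
        by (rule infsum_int_decode[of "\<lambda>\<xi>. fourier_coeff u \<xi> * y \<xi> x", OF summable_norm_terms])
    qed
    show "T u \<in> holder_space w"
      unfolding T_eq by (rule series_in_holder_space)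
    show "(\<lambda>N. holder_norm w (\<lambda>x. T u x - (\<Sum>n<N. fourier_coeff u (int_decode n) * y (int_decode n) x)))
        \<longlonglongrightarrow> 0"
      unfolding T_eq by (rule holder_norm_series_remainder_tendsto_zero)
  qed
  have nuclear_summable: "summable (\<lambda>n. dual_norm s (\<lambda>u. fourier_coeff u (int_decode n)) powr r
      * holder_norm w (y (int_decode n)) powr r)"
    by (rule summable_comparison_test'[OF summable_mult[OF bound_powr_summable, of "2 powr r"], where N = 0])
      (use nuclear_term_le in simp)
  show ?thesis
    unfolding r_nuclear_def
  proof (intro conjI ballI allI exI[of _ "\<lambda>n u. fourier_coeff u (int_decode n)"]
      exI[of _ "\<lambda>n. y (int_decode n)"])
    show "T u \<in> holder_space w" if "u \<in> holder_space s" for u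
      using that by (rule expansion_holder)
    show "cont_functional s (\<lambda>u. fourier_coeff u (int_decode n))" for n
      by (rule cont_functional_fourier_coeff[OF \<open>0 < s\<close>])
    show "y (int_decode n) \<in> holder_space w" for n
      by (rule y_holder)
    show "(\<lambda>N. holder_norm w (\<lambda>x. T u x - (\<Sum>n<N. fourier_coeff u (int_decode n) * y (int_decode n) x)))
        \<longlonglongrightarrow> 0" if "u \<in> holder_space s" for u
      using that by (rule expansion_converges)
  qed (rule nuclear_summable)
qed

lemma nuclear_order_bounds:
  fixes r w \<delta> m :: real
  assumes "0 < r" "r \<le> 1" "0 \<le> \<delta>" "m < - 1 / r - w - 2 * \<delta>"
  shows "m + w < -1" "(m + w) * r < -1"
proof -
  have "m + w < - 1 / r" using assms(3,4) by linarith
  moreover have "1 \<le> 1 / r" using assms(1,2) by simp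
  ultimately show "m + w < -1" by linarith
  have "(m + w) * r < - 1 / r * r"
    using \<open>m + w < - 1 / r\<close> assms(1) by (rule mult_strict_right_mono)
  then show "(m + w) * r < -1" using assms(1) by simp
qed

theorem corollary3p7:
  fixes r s w \<rho> \<delta> m :: real and a :: "real \<Rightarrow> int \<Rightarrow> complex"
  assumes "0 < r" "r \<le> 1" "0 < s" "s < 1" "0 < w" "w < 1"
    and "0 \<le> \<rho>" "\<rho> \<le> 1" "0 \<le> \<delta>" "\<delta> \<le> 1"
    and "symbol_class m \<rho> \<delta> a"
    and "m < - 1 / r - w - 2 * \<delta>"
  shows "r_nuclear r s w (pseudo_op a)"
proof -
  have "0 \<le> w" "w \<le> 1" using \<open>0 < w\<close> \<open>w < 1\<close> by simp_all
  then obtain M where "0 \<le> M"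
    and bound: "\<And>\<xi> x. norm (symbol_mode a \<xi> x) \<le> M * japanese \<xi> powr (m + w)"
    and increment: "\<And>\<xi> x h. norm (symbol_mode a \<xi> (x + h) - symbol_mode a \<xi> x)
        \<le> M * japanese \<xi> powr (m + w) * tabs h powr w"
    using symbol_mode_holder_bounds[OF \<open>symbol_class m \<rho> \<delta> a\<close> \<open>\<delta> \<le> 1\<close>] by blast
  note order_bounds = nuclear_order_bounds[OF \<open>0 < r\<close> \<open>r \<le> 1\<close> \<open>0 \<le> \<delta>\<close> \<open>m < - 1 / r - w - 2 * \<delta>\<close>]
  have powr_eq: "(M * japanese \<xi> powr (m + w)) powr r = M powr r * japanese \<xi> powr ((m + w) * r)" for \<xi>
    using \<open>0 \<le> M\<close> by (simp add: powr_mult powr_powr)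
  show ?thesis
  proof (rule r_nuclear_of_fourier_expansion[where y = "symbol_mode a" and b = "\<lambda>\<xi>. M * japanese \<xi> powr (m + w)"])
    show "pseudo_op a u x = (\<Sum>\<^sub>\<infinity>\<xi>. fourier_coeff u \<xi> * symbol_mode a \<xi> x)" for u x
      by (rule pseudo_op_eq_symbol_modes)
    show "periodic1 (symbol_mode a \<xi>)" for \<xi>
      by (rule periodic1_symbol_mode[OF \<open>symbol_class m \<rho> \<delta> a\<close> \<open>\<delta> \<le> 1\<close>])
    show "summable (\<lambda>n. M * japanese (int_decode n) powr (m + w))"
      by (intro summable_mult summable_japanese_int_decode_powr order_bounds(1))
    show "summable (\<lambda>n. (M * japanese (int_decode n) powr (m + w)) powr r)"
      unfolding powr_eq by (intro summable_mult summable_japanese_int_decode_powr order_bounds(2))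
  qed (use \<open>0 < s\<close> \<open>0 < r\<close> bound increment in auto)
qed

end
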